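(* Let $A = \begin{bmatrix} E & B \\ B^\top & D \end{bmatrix}$ be a symmetric $2N \times 2N$ real matrix, where $E, D$ are symmetric $N\times N$ matrices and $B$ is an $N \times N$ matrix, and fix $\epsilon_0 > 0$. If for all $\epsilon \in (0,\epsilon_0)$ there exist symmetric $N\times N$ matrices $X_\epsilon, -Y_\epsilon$ satisfying $$\begin{bmatrix} X_\epsilon & 0 \\ 0 & -Y_\epsilon \end{bmatrix} \leq A + \epsilon A^2,$$ then $X_\epsilon \leq E + \epsilon_0(E^2 + B B^\top)$ and $-Y_\epsilon \leq D + \epsilon_0(D^2 + B^\top B)$ for all $\epsilon \in (0,\epsilon_0)$.
   Context: Matrices are real; $\mathbb{S}(N)$ denotes the space of symmetric $N\times N$ real matrices, ordered by Löwner's partial order: $P \leq Q$ iff $\langle Px,x\rangle \leq \langle Qx,x\rangle$ for all $x$. In the application, $A = D^2 z(\hat x,\hat y)$ is the Hessian of a $C^2$ test function $z(x,y)$ at a local maximum point of $u(x)-v(y)-z(x,y)$, and $X_\epsilon, Y_\epsilon$ are the matrices produced by the theorem of sums, which satisfy $\begin{bmatrix} X_\epsilon & 0 \\ 0 & -Y_\epsilon \end{bmatrix} \leq A + \epsilon A^2$. *)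

theory Defs
  imports "HOL-Analysis.Analysis"
begin

definition sym_mat :: "('a::comm_ring_1)^'n^'n \<Rightarrow> bool" where
  "sym_mat M \<longleftrightarrow> transpose M = M"

definition loewner_le :: "real^'n^'n \<Rightarrow> real^'n^'n \<Rightarrow> bool" where
  "loewner_le P Q \<longleftrightarrow> (\<forall>x. x \<bullet> (P *v x) \<le> x \<bullet> (Q *v x))"

definition block_mat :: "'a^'n^'n \<Rightarrow> 'a^'n^'n \<Rightarrow> 'a^'n^'n \<Rightarrow> 'a^'n^'n \<Rightarrow> 'a^('n+'n)^('n+'n)" where
  "block_mat P Q R S = (\<chi> i j. case i of
      Inl i' \<Rightarrow> (case j of Inl j' \<Rightarrow> P $ i' $ j' | Inr j' \<Rightarrow> Q $ i' $ j')
    | Inr i' \<Rightarrow> (case j of Inl j' \<Rightarrow> R $ i' $ j' | Inr j' \<Rightarrow> S $ i' $ j'))"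

end

theory Submission
  imports Defs
begin

text \<open>Testing the Loewner inequality for the block matrix on vectors supported in one block
  compares the diagonal blocks. The upper-left block of \<open>A + \<epsilon> A\<^sup>2\<close> is
  \<open>E + \<epsilon> (E\<^sup>2 + B B\<^sup>T)\<close>, the lower-right one is \<open>D + \<epsilon> (D\<^sup>2 + B\<^sup>T B)\<close>, and since the
  matrices multiplied by \<open>\<epsilon>\<close> have the form \<open>M\<^sup>T M + N\<^sup>T N\<close>, hence are positive
  semidefinite, \<open>\<epsilon>\<close> may be increased to \<open>\<epsilon>0\<close>.\<close>

lemma sum_UNIV_Plus:
  fixes f :: "'a::finite + 'b::finite \<Rightarrow> 'c::comm_monoid_add"
  shows "sum f UNIV = (\<Sum>i\<in>UNIV. f (Inl i)) + (\<Sum>i\<in>UNIV. f (Inr i))"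
  using sum.Plus[of "UNIV::'a set" "UNIV::'b set" f] by (simp add: comp_def)

lemma block_mat_add:
  "block_mat P Q R S + block_mat P' Q' R' S' = block_mat (P + P') (Q + Q') (R + R') (S + S')"
  unfolding vec_eq_iff block_mat_def by (simp split: sum.split)

lemma scaleR_block_mat:
  "c *\<^sub>R block_mat P Q R S = block_mat (c *\<^sub>R P) (c *\<^sub>R Q) (c *\<^sub>R R) (c *\<^sub>R S)"
  unfolding vec_eq_iff block_mat_def by (simp split: sum.split)

lemma block_mat_mult:
  "block_mat P Q R S ** block_mat P' Q' R' S' =
   block_mat (P ** P' + Q ** R') (P ** Q' + Q ** S') (R ** P' + S ** R') (R ** Q' + S ** S')"
  unfolding vec_eq_iff block_mat_def
  by (auto simp: matrix_matrix_mult_def sum_UNIV_Plus split: sum.split)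

definition vec_Inl :: "real^'n \<Rightarrow> real^('n + 'n)" where
  "vec_Inl x = (\<chi> i. case i of Inl j \<Rightarrow> x $ j | Inr _ \<Rightarrow> 0)"

definition vec_Inr :: "real^'n \<Rightarrow> real^('n + 'n)" where
  "vec_Inr x = (\<chi> i. case i of Inl _ \<Rightarrow> 0 | Inr j \<Rightarrow> x $ j)"

lemma inner_block_mat_vec_Inl:
  "vec_Inl x \<bullet> (block_mat P Q R S *v vec_Inl x) = x \<bullet> (P *v x)"
  by (simp add: vec_Inl_def block_mat_def inner_vec_def matrix_vector_mult_def sum_UNIV_Plus)

lemma inner_block_mat_vec_Inr:
  "vec_Inr x \<bullet> (block_mat P Q R S *v vec_Inr x) = x \<bullet> (S *v x)"
  by (simp add: vec_Inr_def block_mat_def inner_vec_def matrix_vector_mult_def sum_UNIV_Plus)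

lemma loewner_le_block_mat_upper_left:
  "loewner_le (block_mat P Q R S) (block_mat P' Q' R' S') \<Longrightarrow> loewner_le P P'"
  unfolding loewner_le_def by (metis inner_block_mat_vec_Inl)

lemma loewner_le_block_mat_lower_right:
  "loewner_le (block_mat P Q R S) (block_mat P' Q' R' S') \<Longrightarrow> loewner_le S S'"
  unfolding loewner_le_def by (metis inner_block_mat_vec_Inr)

lemma loewner_le_trans: "loewner_le P Q \<Longrightarrow> loewner_le Q R \<Longrightarrow> loewner_le P R"
  unfolding loewner_le_def by (meson order_trans)

lemma loewner_le_add: "loewner_le P Q \<Longrightarrow> loewner_le P' Q' \<Longrightarrow> loewner_le (P + P') (Q + Q')"
  unfolding loewner_le_def by (simp add: matrix_vector_mult_add_rdistrib inner_add_right add_mono)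

lemma loewner_le_0_transpose_mult:
  fixes M :: "real^'m^'n"
  shows "loewner_le 0 (transpose M ** M)"
  unfolding loewner_le_def
proof
  fix x :: "real^'m"
  have "x \<bullet> ((transpose M ** M) *v x) = (M *v x) \<bullet> (M *v x)"
    by (metis dot_lmul_matrix matrix_vector_mul_assoc transpose_matrix_vector transpose_transpose)
  then show "x \<bullet> (0 *v x) \<le> x \<bullet> ((transpose M ** M) *v x)"
    by simp
qed

lemma loewner_le_add_scaleR_mono:
  assumes "loewner_le 0 N" and "c \<le> d"
  shows "loewner_le (M + c *\<^sub>R N) (M + d *\<^sub>R N)"
  using assms unfolding loewner_le_def
  by (simp add: matrix_vector_mult_add_rdistrib scaleR_matrix_vector_assoc[symmetric]
      inner_add_right mult_right_mono)

theorem lemma2: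
  fixes E B D :: "real^'n^'n"
    and X Y :: "real \<Rightarrow> real^'n^'n"
    and \<epsilon>0 :: real
  assumes "sym_mat E" and "sym_mat D"
    and "\<epsilon>0 > 0"
    and "\<forall>\<epsilon>. 0 < \<epsilon> \<and> \<epsilon> < \<epsilon>0 \<longrightarrow>
           sym_mat (X \<epsilon>) \<and> sym_mat (- Y \<epsilon>) \<and>
           loewner_le (block_mat (X \<epsilon>) 0 0 (- Y \<epsilon>))
             (block_mat E B (transpose B) D
              + \<epsilon> *\<^sub>R (block_mat E B (transpose B) D ** block_mat E B (transpose B) D))"
  shows "\<forall>\<epsilon>. 0 < \<epsilon> \<and> \<epsilon> < \<epsilon>0 \<longrightarrow>
           loewner_le (X \<epsilon>) (E + \<epsilon>0 *\<^sub>R (E ** E + B ** transpose B)) \<and>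
           loewner_le (- Y \<epsilon>) (D + \<epsilon>0 *\<^sub>R (D ** D + transpose B ** B))"
proof (intro allI impI conjI)
  fix \<epsilon> :: real
  assume \<epsilon>: "0 < \<epsilon> \<and> \<epsilon> < \<epsilon>0"
  have block_le: "loewner_le (block_mat (X \<epsilon>) 0 0 (- Y \<epsilon>))
      (block_mat (E + \<epsilon> *\<^sub>R (E ** E + B ** transpose B)) (B + \<epsilon> *\<^sub>R (E ** B + B ** D))
        (transpose B + \<epsilon> *\<^sub>R (transpose B ** E + D ** transpose B))
        (D + \<epsilon> *\<^sub>R (D ** D + transpose B ** B)))"
    using assms(4) \<epsilon> by (simp add: block_mat_mult scaleR_block_mat block_mat_add add.commute)
  have "loewner_le 0 (E ** E + B ** transpose B)"
    using loewner_le_add[OF loewner_le_0_transpose_mult loewner_le_0_transpose_mult,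
        of E "transpose B"] assms(1)
    by (simp add: sym_mat_def transpose_transpose)
  with loewner_le_block_mat_upper_left[OF block_le] \<epsilon>
  show "loewner_le (X \<epsilon>) (E + \<epsilon>0 *\<^sub>R (E ** E + B ** transpose B))"
    by (meson less_imp_le loewner_le_add_scaleR_mono loewner_le_trans)
  have "loewner_le 0 (D ** D + transpose B ** B)"
    using loewner_le_add[OF loewner_le_0_transpose_mult loewner_le_0_transpose_mult,
        of D B] assms(2)
    by (simp add: sym_mat_def)
  with loewner_le_block_mat_lower_right[OF block_le] \<epsilon>
  show "loewner_le (- Y \<epsilon>) (D + \<epsilon>0 *\<^sub>R (D ** D + transpose B ** B))"
    by (meson less_imp_le loewner_le_add_scaleR_mono loewner_le_trans)
qed

end
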